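(* Let $\alpha>1$, $\delta\in(0,\alpha-1)$, $\tau\in(0,\alpha-1-\delta]$, $d\in\mathbb N$, $1\ge\gamma_1\ge\dots\ge\gamma_d>0$, and $g\in\mathcal A_{\alpha,\boldsymbol\gamma,d}$. Let $\boldsymbol x_1,\dots,\boldsymbol x_N\in[0,1]^d$, $c_1,\dots,c_N\in\mathbb R$. Let $L$ be a prime and $\mathcal Z=\{\boldsymbol z_0,\dots,\boldsymbol z_{L-1}\}$ a rank-1 lattice point set of size $L$ satisfying $e(H_{\beta,\boldsymbol\gamma,d},\mathcal Z)\le C_{\boldsymbol\gamma,d}(\beta,\tau')L^{-\beta+\tau'}$ for all $\tau'\in(0,\beta-\frac12]$, where $\beta=\alpha-\frac12-\delta$. Then for every $\nu>1$, with $K=K^\alpha_{\nu,\boldsymbol\gamma,d}$, $$\Big|\frac1N\sum_{n=1}^Nc_ng(\boldsymbol x_n)-\frac1L\sum_{\ell=0}^{L-1}g(\boldsymbol z_\ell)\phi_K(\boldsymbol z_\ell)\Big|\le\mathrm{err}_1(g,\mathcal C)+\mathrm{err}_2(g,\mathcal C)\le\|g\|_{\mathcal A_{\alpha,\boldsymbol\gamma,d}}\Big[\frac{1}{\sqrt\nu}+\frac{\sqrt\nu}{L^{\alpha-\frac12-\delta-\tau}}c_{\alpha,\boldsymbol\gamma,d}\,\zeta_{\delta,d}\,C_{\boldsymbol\gamma,d}\big(\alpha-\tfrac12-\delta,\tau\big)\Big]\overline\mu_N.$$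
   Context: For $\beta>0$, $\gamma>0$, $h\in\mathbb Z$: $r_\beta(\gamma,h)=\max(|h|^{2\beta}/\gamma,1)$, $r_\beta(\boldsymbol\gamma,\boldsymbol k)=\prod_{j=1}^dr_\beta(\gamma_j,k_j)$. $\omega_{\boldsymbol k}(\boldsymbol x)=\exp(2\pi i\,\boldsymbol k\cdot\boldsymbol x)$, $\widehat f_{\boldsymbol k}=\int_{[0,1]^d}f\,\overline{\omega_{\boldsymbol k}}$. Weighted Wiener algebra $\mathcal A_{\alpha,\boldsymbol\gamma,d}=\{f\in L_1([0,1]^d):\|f\|_{\mathcal A_{\alpha,\boldsymbol\gamma,d}}=\sum_{\boldsymbol k}\sqrt{r_\alpha(\boldsymbol\gamma,\boldsymbol k)}|\widehat f_{\boldsymbol k}|<\infty\}$ (functions identified with their uniformly convergent Fourier series). Weighted Korobov space ($\beta>1/2$): $H_{\beta,\boldsymbol\gamma,d}=\{f\in L_2:\|f\|_{H_{\beta,\boldsymbol\gamma,d}}=(\sum_{\boldsymbol k}r_\beta(\boldsymbol\gamma,\boldsymbol k)|\widehat f_{\boldsymbol k}|^2)^{1/2}<\infty\}$. Weighted continuous hyperbolic cross: $K^\alpha_{\nu,\boldsymbol\gamma,d}=\{\boldsymbol k\in\mathbb Z^d:r_\alpha(\boldsymbol\gamma,\boldsymbol k)\le\nu\}$. For finite $K$: $\phi_K(\boldsymbol x)=\sum_{\boldsymbol k\in K}\check\phi_{\boldsymbol k}\overline{\omega_{\boldsymbol k}(\boldsymbol x)}$, $\check\phi_{\boldsymbol k}=\frac1N\sum_nc_n\omega_{\boldsymbol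 k}(\boldsymbol x_n)$; $\mathcal C=(c_n)_n$; $\mathrm{err}_1(g,\mathcal C)=|\frac1N\sum_nc_ng(\boldsymbol x_n)-\int_{[0,1]^d}g\phi_K|$ and $\mathrm{err}_2(g,\mathcal C)=|\int_{[0,1]^d}g\phi_K-\frac1L\sum_{\ell=0}^{L-1}(g\phi_K)(\boldsymbol z_\ell)|$. A rank-1 lattice point set of size $L$ with generating vector $\mathfrak g\in\{1,\dots,L-1\}^d$ is $\{\boldsymbol z_\ell=(\ell\mathfrak g/L)\bmod1:\ell=0,\dots,L-1\}$ (componentwise fractional part). Worst-case error: $e(H_{\beta,\boldsymbol\gamma,d},\mathcal Z)=\sup_{\|f\|_{H_{\beta,\boldsymbol\gamma,d}}\le1}|\int_{[0,1]^d}f-\frac1L\sum_\ell f(\boldsymbol z_\ell)|$. Constants: $C_{\boldsymbol\gamma,d}(\beta,\tau)=2^{\beta-\tau}\prod_{j=1}^d[1+2\gamma_j^{1/(2(\beta-\tau))}\zeta(\frac{\beta}{\beta-\tau})]^{\beta-\tau}$; $\overline\mu_N=\frac1N\sum_n|c_n|$; $c_{\alpha,\boldsymbol\gamma,d}=\sqrt{\prod_j\max(1,2^{2\alpha}\gamma_j)}$; $\zeta_{\delta,d}=[1+2\zeta(1+2\delta)]^{d/2}$, $\zeta$ the Riemann zeta function. *)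

theory Defs
  imports "HOL-Analysis.Analysis"
begin

text \<open>Dimension d is the cardinality of the finite (linearly ordered) index type 'n.
  Points of [0,1]^d are elements of real^'n, frequencies are elements of int^'n.\<close>

definition rzeta :: "real \<Rightarrow> real" where
  "rzeta s = (\<Sum>n. 1 / real (Suc n) powr s)"

definition r1 :: "real \<Rightarrow> real \<Rightarrow> int \<Rightarrow> real" where
  "r1 \<beta> \<gamma> h = max (\<bar>real_of_int h\<bar> powr (2 * \<beta>) / \<gamma>) 1"

definition rw :: "real \<Rightarrow> ('n::finite \<Rightarrow> real) \<Rightarrow> int^'n \<Rightarrow> real" where
  "rw \<beta> \<gamma> k = (\<Prod>j\<in>UNIV. r1 \<beta> (\<gamma> j) (k $ j))"

definition omega :: "int^'n::finite \<Rightarrow> real^'n \<Rightarrow> complex" where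
  "omega k x = exp (2 * complex_of_real pi * \<i> *
                    complex_of_real (\<Sum>j\<in>UNIV. real_of_int (k $ j) * x $ j))"

definition unit_cube :: "(real^'n::finite) set" where
  "unit_cube = cbox 0 One"

definition fcoeff :: "(real^'n::finite \<Rightarrow> complex) \<Rightarrow> int^'n \<Rightarrow> complex" where
  "fcoeff f k = integral unit_cube (\<lambda>x. f x * cnj (omega k x))"

definition wiener_space :: "real \<Rightarrow> ('n::finite \<Rightarrow> real) \<Rightarrow> (real^'n \<Rightarrow> complex) set" where
  "wiener_space \<alpha> \<gamma> = {f. f absolutely_integrable_on unit_cube \<and>
      (\<lambda>k. sqrt (rw \<alpha> \<gamma> k) * cmod (fcoeff f k)) summable_on UNIV \<and>
      (\<forall>x\<in>unit_cube. f x = (\<Sum>\<^sub>\<infinity>k. fcoeff f k * omega k x))}"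

definition wiener_norm :: "real \<Rightarrow> ('n::finite \<Rightarrow> real) \<Rightarrow> (real^'n \<Rightarrow> complex) \<Rightarrow> real" where
  "wiener_norm \<alpha> \<gamma> f = (\<Sum>\<^sub>\<infinity>k. sqrt (rw \<alpha> \<gamma> k) * cmod (fcoeff f k))"

text \<open>Weighted Korobov space (beta > 1/2): L2 functions with finite weighted norm,
  identified with their (absolutely convergent) Fourier series.\<close>
definition korobov_space :: "real \<Rightarrow> ('n::finite \<Rightarrow> real) \<Rightarrow> (real^'n \<Rightarrow> complex) set" where
  "korobov_space \<beta> \<gamma> = {f. f absolutely_integrable_on unit_cube \<and>
      (\<lambda>x. (cmod (f x))^2) integrable_on unit_cube \<and>
      (\<lambda>k. rw \<beta> \<gamma> k * (cmod (fcoeff f k))^2) summable_on UNIV \<and>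
      (\<forall>x\<in>unit_cube. f x = (\<Sum>\<^sub>\<infinity>k. fcoeff f k * omega k x))}"

definition korobov_norm :: "real \<Rightarrow> ('n::finite \<Rightarrow> real) \<Rightarrow> (real^'n \<Rightarrow> complex) \<Rightarrow> real" where
  "korobov_norm \<beta> \<gamma> f = sqrt (\<Sum>\<^sub>\<infinity>k. rw \<beta> \<gamma> k * (cmod (fcoeff f k))^2)"

definition lattice_pt :: "nat \<Rightarrow> nat^'n::finite \<Rightarrow> nat \<Rightarrow> real^'n" where
  "lattice_pt L gv l = (\<chi> j. frac (real l * real (gv $ j) / real L))"

definition wce :: "real \<Rightarrow> ('n::finite \<Rightarrow> real) \<Rightarrow> nat \<Rightarrow> (nat \<Rightarrow> real^'n) \<Rightarrow> ereal" where
  "wce \<beta> \<gamma> L z = (SUP f\<in>{f \<in> korobov_space \<beta> \<gamma>. korobov_norm \<beta> \<gamma> f \<le> 1}.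
      ereal (cmod (integral unit_cube f - (1 / of_nat L) * (\<Sum>l<L. f (z l)))))"

definition hyp_cross :: "real \<Rightarrow> real \<Rightarrow> ('n::finite \<Rightarrow> real) \<Rightarrow> (int^'n) set" where
  "hyp_cross \<alpha> \<nu> \<gamma> = {k. rw \<alpha> \<gamma> k \<le> \<nu>}"

definition phi_check :: "nat \<Rightarrow> (nat \<Rightarrow> real) \<Rightarrow> (nat \<Rightarrow> real^'n::finite) \<Rightarrow> int^'n \<Rightarrow> complex" where
  "phi_check N c x k = (1 / of_nat N) * (\<Sum>n=1..N. complex_of_real (c n) * omega k (x n))"

definition phiK :: "(int^'n::finite) set \<Rightarrow> nat \<Rightarrow> (nat \<Rightarrow> real) \<Rightarrow> (nat \<Rightarrow> real^'n) \<Rightarrow> real^'n \<Rightarrow> complex" where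
  "phiK K N c x y = (\<Sum>k\<in>K. phi_check N c x k * cnj (omega k y))"

definition err1 :: "(real^'n::finite \<Rightarrow> complex) \<Rightarrow> (int^'n) set \<Rightarrow> nat \<Rightarrow> (nat \<Rightarrow> real) \<Rightarrow> (nat \<Rightarrow> real^'n) \<Rightarrow> real" where
  "err1 g K N c x = cmod ((1 / of_nat N) * (\<Sum>n=1..N. complex_of_real (c n) * g (x n))
      - integral unit_cube (\<lambda>y. g y * phiK K N c x y))"

definition err2 :: "(real^'n::finite \<Rightarrow> complex) \<Rightarrow> (int^'n) set \<Rightarrow> nat \<Rightarrow> (nat \<Rightarrow> real) \<Rightarrow> (nat \<Rightarrow> real^'n) \<Rightarrow> nat \<Rightarrow> (nat \<Rightarrow> real^'n) \<Rightarrow> real" where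
  "err2 g K N c x L z = cmod (integral unit_cube (\<lambda>y. g y * phiK K N c x y)
      - (1 / of_nat L) * (\<Sum>l<L. g (z l) * phiK K N c x (z l)))"

definition Cconst :: "('n::finite \<Rightarrow> real) \<Rightarrow> real \<Rightarrow> real \<Rightarrow> real" where
  "Cconst \<gamma> \<beta> \<tau> = 2 powr (\<beta> - \<tau>) *
     (\<Prod>j\<in>UNIV. (1 + 2 * \<gamma> j powr (1 / (2 * (\<beta> - \<tau>))) * rzeta (\<beta> / (\<beta> - \<tau>))) powr (\<beta> - \<tau>))"

definition mu_bar :: "nat \<Rightarrow> (nat \<Rightarrow> real) \<Rightarrow> real" where
  "mu_bar N c = (1 / real N) * (\<Sum>n=1..N. \<bar>c n\<bar>)"

definition c_const :: "real \<Rightarrow> ('n::finite \<Rightarrow> real) \<Rightarrow> real" where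
  "c_const \<alpha> \<gamma> = sqrt (\<Prod>j\<in>UNIV. max 1 (2 powr (2 * \<alpha>) * \<gamma> j))"

definition zeta_const :: "real \<Rightarrow> nat \<Rightarrow> real" where
  "zeta_const \<delta> d = (1 + 2 * rzeta (1 + 2 * \<delta>)) powr (real d / 2)"

end

theory Submission
  imports Defs
begin

text \<open>
  The QMC sum of \<open>g\<close> equals the series over \<open>k\<close> of \<open>fcoeff g k * phi_check N c x k\<close>, and
  the integral of \<open>g * phiK\<close> is the same series restricted to the hyperbolic cross \<open>K\<close>. Hence
  \<open>err1\<close> is the tail of the series outside \<open>K\<close>, where \<open>r\<^sub>\<alpha> > \<nu>\<close>, and is at most
  \<open>wiener_norm \<alpha> \<gamma> g * mu_bar N c / sqrt \<nu>\<close>.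

  The Fourier coefficients of \<open>g * phiK\<close> are \<open>\<Sum>k\<in>K. phi_check N c x k * fcoeff g (k + m)\<close>.
  For \<open>\<beta> = \<alpha> - 1/2 - \<delta>\<close> the weights are quasi-submultiplicative,
  \<open>r\<^sub>\<beta>(m) \<le> c\<^sup>2 r\<^sub>\<beta>(k + m) r\<^sub>\<beta>(k)\<close>, and \<open>r\<^sub>\<beta> = decay (1 + 2\<delta>) * r\<^sub>\<alpha>\<close>, where the sum of
  the decay factor over any finite set is at most \<open>(zeta_const \<delta> d)\<^sup>2\<close>. As \<open>r\<^sub>\<alpha> \<le> \<nu>\<close> on \<open>K\<close>,
  Cauchy--Schwarz in \<open>k\<close> followed by summation over \<open>m\<close> bounds the Korobov norm of \<open>g * phiK\<close>
  by \<open>mu_bar N c * c_const \<alpha> \<gamma> * sqrt \<nu> * wiener_norm \<alpha> \<gamma> g * zeta_const \<delta> d\<close>, and the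
  worst-case error hypothesis at \<open>\<tau>' = \<tau>\<close> turns this into the bound on \<open>err2\<close>.
\<close>

section \<open>Characters and integrability on the unit cube\<close>

lemma omega_add: "omega (h + k) x = omega h x * omega k x"
  unfolding omega_def
  by (simp add: sum.distrib distrib_right distrib_left exp_add[symmetric] algebra_simps)

lemma cnj_omega: "cnj (omega k x) = omega (- k) x"
proof -
  have cnj_exp: "cnj (exp (2 * complex_of_real pi * \<i> * complex_of_real r)) =
      exp (2 * complex_of_real pi * \<i> * complex_of_real (- r))" for r
    by (simp add: exp_cnj)
  show ?thesis
    unfolding omega_def cnj_exp by (simp add: sum_negf[symmetric])
qed

lemma norm_omega [simp]: "norm (omega k x) = 1"
  unfolding omega_def by (simp add: norm_exp_eq_Re)

lemma continuous_on_omega [continuous_intros]: "continuous_on S (omega k)"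
  unfolding omega_def by (intro continuous_intros)

lemma sets_lebesgue_unit_cube [simp]: "unit_cube \<in> sets lebesgue"
  unfolding unit_cube_def by simp

lemma absolutely_integrable_mult_bounded_continuous:
  fixes f h :: "'a::euclidean_space \<Rightarrow> complex"
  assumes f: "f absolutely_integrable_on S" and S: "S \<in> sets lebesgue"
    and h: "continuous_on S h" "bounded (h ` S)"
  shows "(\<lambda>y. f y * h y) absolutely_integrable_on S"
proof -
  have "(\<lambda>y. h y * f y) absolutely_integrable_on S"
    using absolutely_integrable_bounded_measurable_product[OF bilinear_times
        continuous_imp_measurable_on_sets_lebesgue[OF h(1) S] S h(2) f] .
  then show ?thesis by (simp add: mult.commute)
qed

lemma integrable_square_norm_bounded:
  fixes f :: "'a::euclidean_space \<Rightarrow> 'b::euclidean_space"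
  assumes f: "f absolutely_integrable_on S" and S: "S \<in> sets lebesgue"
    and B: "\<And>y. y \<in> S \<Longrightarrow> norm (f y) \<le> B"
  shows "(\<lambda>y. (norm (f y))\<^sup>2) integrable_on S"
proof (rule measurable_bounded_by_integrable_imp_integrable[OF _ _ _ S])
  have "f \<in> borel_measurable (lebesgue_on S)"
    using f absolutely_integrable_measurable[OF S] by blast
  then show "(\<lambda>y. (norm (f y))\<^sup>2) \<in> borel_measurable (lebesgue_on S)"
    by measurable
  show "(\<lambda>y. B * norm (f y)) integrable_on S"
    using f by (intro integrable_on_mult_right) (simp add: absolutely_integrable_on_def)
  show "norm ((norm (f y))\<^sup>2) \<le> B * norm (f y)" if "y \<in> S" for y
    using B[OF that] by (simp add: power2_eq_square mult_right_mono)
qed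

lemma integrable_mult_cnj_omega:
  assumes "f absolutely_integrable_on unit_cube"
  shows "(\<lambda>y. f y * cnj (omega k y)) integrable_on unit_cube"
proof -
  have "bounded (omega (- k) ` unit_cube)"
    by (auto simp: bounded_iff)
  then have "(\<lambda>y. f y * omega (- k) y) absolutely_integrable_on unit_cube"
    by (intro absolutely_integrable_mult_bounded_continuous[OF assms] continuous_on_omega) auto
  then show ?thesis
    by (simp add: cnj_omega absolutely_integrable_on_def)
qed

lemma fcoeff_cmult: "fcoeff (\<lambda>y. a * f y) k = a * fcoeff f k"
  unfolding fcoeff_def by (simp add: mult.assoc)

section \<open>The weights\<close>

lemma r1_ge_1: "1 \<le> r1 \<beta> \<gamma> h"
  unfolding r1_def by simp

lemma rw_ge_1: "1 \<le> rw \<beta> \<gamma> k"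
  unfolding rw_def by (rule prod_ge_1) (simp add: r1_ge_1)

lemma rw_pos [simp]: "0 < rw \<beta> \<gamma> k"
  using rw_ge_1[of \<beta> \<gamma> k] by simp

lemma rw_nonneg [simp]: "0 \<le> rw \<beta> \<gamma> k"
  using rw_ge_1[of \<beta> \<gamma> k] by simp

lemma r1_le_rw: "r1 \<beta> (\<gamma> j) (k $ j) \<le> rw \<beta> \<gamma> k"
proof -
  have "rw \<beta> \<gamma> k = r1 \<beta> (\<gamma> j) (k $ j) * (\<Prod>i\<in>UNIV - {j}. r1 \<beta> (\<gamma> i) (k $ i))"
    unfolding rw_def by (simp add: prod.remove)
  moreover have "1 \<le> (\<Prod>i\<in>UNIV - {j}. r1 \<beta> (\<gamma> i) (k $ i))"
    by (rule prod_ge_1) (simp add: r1_ge_1)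
  ultimately show ?thesis
    using r1_ge_1[of \<beta> "\<gamma> j" "k $ j"] by (simp add: mult_le_cancel_left1)
qed

definition int_box :: "int \<Rightarrow> (int^'n::finite) set" where
  "int_box M = vec_lambda ` PiE UNIV (\<lambda>_. {-M..M})"

lemma mem_int_box: "k \<in> int_box M \<longleftrightarrow> (\<forall>j. \<bar>k $ j\<bar> \<le> M)"
proof
  assume "\<forall>j. \<bar>k $ j\<bar> \<le> M"
  then have "vec_nth k \<in> PiE UNIV (\<lambda>_. {-M..M})"
    by (auto simp: abs_le_iff minus_le_iff)
  then show "k \<in> int_box M"
    unfolding int_box_def by (metis image_eqI vec_nth_inverse)
qed (auto simp: int_box_def abs_le_iff PiE_iff minus_le_iff)

lemma finite_int_box: "finite (int_box M)"
  unfolding int_box_def by (intro finite_imageI finite_PiE) auto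

lemma sum_prod_int_box:
  fixes w :: "int \<Rightarrow> 'a::comm_semiring_1"
  shows "(\<Sum>k\<in>(int_box M :: (int^'n::finite) set). \<Prod>j\<in>UNIV. w (k $ j))
    = (\<Sum>t\<in>{-M..M}. w t) ^ CARD('n)"
proof -
  have inj: "inj_on vec_lambda (PiE (UNIV :: 'n set) (\<lambda>_. {-M..M}))"
    by (auto simp: inj_on_def vec_lambda_inject)
  have "(\<Sum>k\<in>(int_box M :: (int^'n) set). \<Prod>j\<in>UNIV. w (k $ j))
      = (\<Sum>f\<in>PiE (UNIV :: 'n set) (\<lambda>_. {-M..M}). \<Prod>j\<in>UNIV. w (f j))"
    unfolding int_box_def by (subst sum.reindex[OF inj]) simp
  also have "\<dots> = (\<Prod>j\<in>(UNIV :: 'n set). \<Sum>t\<in>{-M..M}. w t)"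
    by (subst prod_sum_PiE) auto
  finally show ?thesis by simp
qed

lemma finite_hyp_cross:
  assumes "1/2 \<le> \<alpha>" and "\<forall>j. 0 < \<gamma> j \<and> \<gamma> j \<le> 1"
  shows "finite (hyp_cross \<alpha> \<nu> (\<gamma> :: 'n::finite \<Rightarrow> real))"
proof -
  have "hyp_cross \<alpha> \<nu> \<gamma> \<subseteq> int_box \<lceil>\<nu>\<rceil>"
  proof
    fix k :: "int^'n" assume "k \<in> hyp_cross \<alpha> \<nu> \<gamma>"
    then have rw: "rw \<alpha> \<gamma> k \<le> \<nu>" by (simp add: hyp_cross_def)
    have "\<bar>real_of_int (k $ j)\<bar> \<le> \<nu>" for j
    proof (cases "1 \<le> \<bar>real_of_int (k $ j)\<bar>")
      case True
      then have "\<bar>real_of_int (k $ j)\<bar> = \<bar>real_of_int (k $ j)\<bar> powr 1"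
        by simp
      also have "\<dots> \<le> \<bar>real_of_int (k $ j)\<bar> powr (2 * \<alpha>)"
        using True assms(1) by (intro powr_mono) auto
      also have "\<dots> \<le> \<bar>real_of_int (k $ j)\<bar> powr (2 * \<alpha>) / \<gamma> j"
        using assms(2) by (simp add: le_divide_eq mult_left_le)
      also have "\<dots> \<le> r1 \<alpha> (\<gamma> j) (k $ j)"
        unfolding r1_def by simp
      finally show ?thesis
        using r1_le_rw[of \<alpha> \<gamma> j k] rw by linarith
    next
      case False
      then show ?thesis
        using rw_ge_1[of \<alpha> \<gamma> k] rw by linarith
    qed
    then show "k \<in> int_box \<lceil>\<nu>\<rceil>"
      unfolding mem_int_box by (metis ceiling_mono ceiling_of_int of_int_abs)
  qed
  then show ?thesis
    using finite_int_box finite_subset by blast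
qed

lemma abs_diff_powr_le:
  fixes h k :: int
  assumes "h \<noteq> 0" "k \<noteq> 0" "0 \<le> \<beta>" "\<beta> \<le> \<alpha>"
  shows "\<bar>real_of_int (h - k)\<bar> powr (2 * \<beta>)
    \<le> 2 powr (2 * \<alpha>) * \<bar>real_of_int h\<bar> powr (2 * \<beta>) * \<bar>real_of_int k\<bar> powr (2 * \<beta>)"
proof -
  let ?h = "\<bar>real_of_int h\<bar>" and ?k = "\<bar>real_of_int k\<bar>"
  have "1 \<le> ?h" "1 \<le> ?k"
    using assms(1,2) by auto
  then have "?h \<le> ?h * ?k" "?k \<le> ?h * ?k"
    by (simp_all add: mult_le_cancel_left1 mult_le_cancel_right1)
  then have "\<bar>real_of_int (h - k)\<bar> \<le> 2 * ?h * ?k"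
    using abs_triangle_ineq4[of "real_of_int h" "real_of_int k"] by simp
  then have "\<bar>real_of_int (h - k)\<bar> powr (2 * \<beta>) \<le> (2 * ?h * ?k) powr (2 * \<beta>)"
    using assms(3) by (intro powr_mono2) auto
  also have "\<dots> = 2 powr (2 * \<beta>) * ?h powr (2 * \<beta>) * ?k powr (2 * \<beta>)"
    by (simp add: powr_mult)
  also have "\<dots> \<le> 2 powr (2 * \<alpha>) * ?h powr (2 * \<beta>) * ?k powr (2 * \<beta>)"
    using assms(4) by (intro mult_right_mono) auto
  finally show ?thesis .
qed

lemma r1_diff_le:
  fixes h k :: int
  assumes "0 \<le> \<beta>" "\<beta> \<le> \<alpha>" "0 < \<gamma>"
  shows "r1 \<beta> \<gamma> (h - k) \<le> max 1 (2 powr (2 * \<alpha>) * \<gamma>) * r1 \<beta> \<gamma> h * r1 \<beta> \<gamma> k"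
proof -
  let ?P = "max 1 (2 powr (2 * \<alpha>) * \<gamma>)"
  have P: "1 \<le> ?P" by simp
  have "1 * 1 * 1 \<le> ?P * r1 \<beta> \<gamma> h * r1 \<beta> \<gamma> k"
    by (intro mult_mono P r1_ge_1) (simp_all add: order_trans[OF zero_le_one r1_ge_1])
  then have one: "1 \<le> ?P * r1 \<beta> \<gamma> h * r1 \<beta> \<gamma> k"
    by simp
  consider "h = 0" | "k = 0" | "h \<noteq> 0" "k \<noteq> 0" by blast
  then show ?thesis
  proof cases
    case 1
    then have "r1 \<beta> \<gamma> (h - k) = r1 \<beta> \<gamma> k" "r1 \<beta> \<gamma> h = 1"
      by (simp_all add: r1_def)
    then show ?thesis
      using P r1_ge_1[of \<beta> \<gamma> k] by (simp add: mult_le_cancel_right1)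
  next
    case 2
    then have "r1 \<beta> \<gamma> k = 1"
      by (simp add: r1_def)
    then show ?thesis
      using 2 P r1_ge_1[of \<beta> \<gamma> h] by (simp add: mult_le_cancel_right1)
  next
    case 3
    have "\<bar>real_of_int (h - k)\<bar> powr (2 * \<beta>) / \<gamma>
        \<le> (2 powr (2 * \<alpha>) * \<gamma>)
          * (\<bar>real_of_int h\<bar> powr (2 * \<beta>) / \<gamma>) * (\<bar>real_of_int k\<bar> powr (2 * \<beta>) / \<gamma>)"
      using abs_diff_powr_le[OF 3 assms(1,2)] assms(3) by (simp add: field_simps)
    also have "\<dots> \<le> ?P * r1 \<beta> \<gamma> h * r1 \<beta> \<gamma> k"
      unfolding r1_def using assms(3) by (intro mult_mono) auto
    finally show ?thesis
      using one by (simp add: r1_def)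
  qed
qed

lemma c_const_nonneg: "0 \<le> c_const \<alpha> \<gamma>"
  unfolding c_const_def by (simp add: prod_nonneg)

lemma c_const_square: "(c_const \<alpha> \<gamma>)\<^sup>2 = (\<Prod>j\<in>UNIV. max 1 (2 powr (2 * \<alpha>) * \<gamma> j))"
  unfolding c_const_def by (simp add: prod_nonneg)

lemma rw_diff_le:
  assumes "0 \<le> \<beta>" "\<beta> \<le> \<alpha>" "\<forall>j. 0 < \<gamma> j"
  shows "rw \<beta> \<gamma> (h - k) \<le> (c_const \<alpha> \<gamma>)\<^sup>2 * rw \<beta> \<gamma> h * rw \<beta> \<gamma> k"
proof -
  have "rw \<beta> \<gamma> (h - k) \<le> (\<Prod>j\<in>UNIV. max 1 (2 powr (2 * \<alpha>) * \<gamma> j)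
                            * r1 \<beta> (\<gamma> j) (h $ j) * r1 \<beta> (\<gamma> j) (k $ j))"
    unfolding rw_def using assms r1_ge_1
    by (intro prod_mono) (auto intro: order_trans[OF zero_le_one] r1_diff_le)
  also have "\<dots> = (c_const \<alpha> \<gamma>)\<^sup>2 * rw \<beta> \<gamma> h * rw \<beta> \<gamma> k"
    unfolding c_const_square rw_def by (simp add: prod.distrib)
  finally show ?thesis .
qed

definition decay1 :: "real \<Rightarrow> int \<Rightarrow> real" where
  "decay1 s t = max 1 \<bar>real_of_int t\<bar> powr - s"

definition decay :: "real \<Rightarrow> int^'n::finite \<Rightarrow> real" where
  "decay s k = (\<Prod>j\<in>UNIV. decay1 s (k $ j))"

lemma decay1_nonneg: "0 \<le> decay1 s t"
  unfolding decay1_def by simp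

lemma decay_nonneg: "0 \<le> decay s k"
  unfolding decay_def by (simp add: prod_nonneg decay1_nonneg)

lemma decay_le_1:
  assumes "0 \<le> s"
  shows "decay s k \<le> 1"
  unfolding decay_def
proof (rule prod_le_1)
  fix j
  have "decay1 s (k $ j) \<le> max 1 \<bar>real_of_int (k $ j)\<bar> powr 0"
    unfolding decay1_def using assms by (intro powr_mono) auto
  also have "\<dots> = 1"
    by (auto simp: max_def)
  finally show "0 \<le> decay1 s (k $ j) \<and> decay1 s (k $ j) \<le> 1"
    by (simp add: decay1_nonneg)
qed

lemma r1_eq_decay1_mult:
  assumes "0 \<le> \<beta>" "0 \<le> s" "2 * \<beta> = 2 * \<alpha> - s" "0 < \<gamma>" "\<gamma> \<le> 1"
  shows "r1 \<beta> \<gamma> t = decay1 s t * r1 \<alpha> \<gamma> t"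
proof (cases "t = 0")
  case True
  then show ?thesis by (simp add: r1_def decay1_def)
next
  case False
  let ?t = "\<bar>real_of_int t\<bar>"
  have t: "1 \<le> ?t"
    using False by auto
  have "1 \<le> ?t powr (2 * \<beta>) / \<gamma>" "1 \<le> ?t powr (2 * \<alpha>) / \<gamma>"
    using assms t ge_one_powr_ge_zero[OF t, of "2 * \<beta>"] ge_one_powr_ge_zero[OF t, of "2 * \<alpha>"]
    by (simp_all add: le_divide_eq)
  then have "r1 \<beta> \<gamma> t = ?t powr (2 * \<beta>) / \<gamma>" "r1 \<alpha> \<gamma> t = ?t powr (2 * \<alpha>) / \<gamma>"
    by (simp_all add: r1_def)
  moreover have "decay1 s t = ?t powr - s"
    using t by (simp add: decay1_def max_def)
  moreover have "?t powr (2 * \<beta>) = ?t powr - s * ?t powr (2 * \<alpha>)"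
    using assms(3) by (simp add: powr_add[symmetric])
  ultimately show ?thesis
    by simp
qed

lemma rw_eq_decay_mult:
  assumes "0 \<le> \<beta>" "0 \<le> s" "2 * \<beta> = 2 * \<alpha> - s" "\<forall>j. 0 < \<gamma> j \<and> \<gamma> j \<le> 1"
  shows "rw \<beta> \<gamma> k = decay s k * rw \<alpha> \<gamma> k"
  unfolding rw_def decay_def prod.distrib[symmetric]
  using assms by (intro prod.cong refl r1_eq_decay1_mult) auto

lemma rw_le_shift:
  assumes "0 \<le> \<beta>" "0 \<le> s" "2 * \<beta> = 2 * \<alpha> - s" "\<forall>j. 0 < \<gamma> j \<and> \<gamma> j \<le> 1"
    and k: "k \<in> hyp_cross \<alpha> \<nu> \<gamma>"
  shows "rw \<beta> \<gamma> m \<le> (c_const \<alpha> \<gamma>)\<^sup>2 * \<nu> * decay s k * rw \<alpha> \<gamma> (k + m)"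
proof -
  have "rw \<beta> \<gamma> m = rw \<beta> \<gamma> ((k + m) - k)"
    by simp
  also have "\<dots> \<le> (c_const \<alpha> \<gamma>)\<^sup>2 * rw \<beta> \<gamma> (k + m) * rw \<beta> \<gamma> k"
    using assms by (intro rw_diff_le) auto
  also have "\<dots> \<le> (c_const \<alpha> \<gamma>)\<^sup>2 * rw \<alpha> \<gamma> (k + m) * (decay s k * \<nu>)"
  proof (intro mult_mono mult_left_mono)
    show "rw \<beta> \<gamma> (k + m) \<le> rw \<alpha> \<gamma> (k + m)"
      unfolding rw_eq_decay_mult[OF assms(1-4)]
      using decay_le_1[OF assms(2)] by (simp add: mult_le_cancel_right1)
    show "rw \<beta> \<gamma> k \<le> decay s k * \<nu>"
      unfolding rw_eq_decay_mult[OF assms(1-4)]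
      using k by (simp add: hyp_cross_def mult_left_mono[OF _ decay_nonneg])
  qed simp_all
  finally show ?thesis
    by (simp add: algebra_simps)
qed

lemma summable_rzeta:
  assumes "1 < s"
  shows "summable (\<lambda>n. 1 / real (Suc n) powr s)"
proof -
  have "summable (\<lambda>n. real n powr - s)"
    using assms summable_real_powr_iff by simp
  then show ?thesis
    by (subst (asm) summable_Suc_iff[symmetric]) (simp add: powr_minus_divide)
qed

lemma sum_decay1_pos_le:
  assumes "1 < s" "finite T" "T \<subseteq> {0<..}"
  shows "sum (decay1 s) T \<le> rzeta s"
proof -
  have inj: "inj_on (\<lambda>t. nat (t - 1)) T"
    using assms(3) by (fastforce simp: inj_on_def subset_iff eq_nat_nat_iff)
  have "sum (decay1 s) T = (\<Sum>n\<in>(\<lambda>t. nat (t - 1)) ` T. 1 / real (Suc n) powr s)"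
    using assms(3) by (subst sum.reindex[OF inj]) (auto intro!: sum.cong simp: decay1_def powr_minus_divide)
  also have "\<dots> \<le> rzeta s"
    unfolding rzeta_def using assms by (intro sum_le_suminf summable_rzeta) auto
  finally show ?thesis .
qed

lemma sum_decay1_le:
  assumes "1 < s" "finite T"
  shows "sum (decay1 s) T \<le> 1 + 2 * rzeta s"
proof -
  let ?pos = "T \<inter> {0<..}" and ?neg = "T \<inter> {..<0}"
  have "sum (decay1 s) T = sum (decay1 s) ?pos + sum (decay1 s) (T - {0<..})"
    using assms(2) by (rule sum.Int_Diff)
  moreover have "T - {0<..} - {..<0} = T \<inter> {0}" "(T - {0<..}) \<inter> {..<0} = ?neg"
    by auto
  then have "sum (decay1 s) (T - {0<..}) = sum (decay1 s) ?neg + sum (decay1 s) (T \<inter> {0})"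
    using assms(2) sum.Int_Diff[of "T - {0<..}" "decay1 s" "{..<0}"] by simp
  ultimately have split:
    "sum (decay1 s) T = sum (decay1 s) ?pos + sum (decay1 s) ?neg + sum (decay1 s) (T \<inter> {0})"
    by simp
  have "sum (decay1 s) ?neg = sum (decay1 s) (uminus ` ?neg)"
    by (subst sum.reindex) (auto simp: inj_on_def decay1_def)
  also have "\<dots> \<le> rzeta s"
    using assms by (intro sum_decay1_pos_le) auto
  finally have "sum (decay1 s) ?neg \<le> rzeta s" .
  moreover have "sum (decay1 s) ?pos \<le> rzeta s"
    using assms by (intro sum_decay1_pos_le) auto
  moreover have "sum (decay1 s) (T \<inter> {0}) \<le> 1"
    by (cases "0 \<in> T") (auto simp: decay1_def Int_insert_right)
  ultimately show ?thesis
    using split by linarith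
qed

lemma sum_decay_le:
  fixes K :: "(int^'n::finite) set"
  assumes "1 < s" "finite K"
  shows "sum (decay s) K \<le> (1 + 2 * rzeta s) ^ CARD('n)"
proof -
  define M where "M = (\<Sum>k\<in>K. \<Sum>j\<in>UNIV. \<bar>k $ j\<bar>)"
  have "K \<subseteq> (int_box M :: (int^'n) set)"
  proof
    fix k assume k: "k \<in> K"
    have "\<bar>k $ j\<bar> \<le> M" for j
    proof -
      have "\<bar>k $ j\<bar> \<le> (\<Sum>j\<in>UNIV. \<bar>k $ j\<bar>)"
        by (rule member_le_sum) auto
      also have "\<dots> \<le> M"
        unfolding M_def using k assms(2) by (intro member_le_sum) (auto intro: sum_nonneg)
      finally show ?thesis .
    qed
    then show "k \<in> int_box M"
      by (simp add: mem_int_box)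
  qed
  then have "sum (decay s) K \<le> sum (decay s) (int_box M :: (int^'n) set)"
    by (intro sum_mono2 finite_int_box) (auto simp: decay_nonneg)
  also have "\<dots> = (\<Sum>t\<in>{-M..M}. decay1 s t) ^ CARD('n)"
    unfolding decay_def by (rule sum_prod_int_box)
  also have "\<dots> \<le> (1 + 2 * rzeta s) ^ CARD('n)"
    using assms(1) by (intro power_mono sum_decay1_le sum_nonneg) (auto simp: decay1_nonneg)
  finally show ?thesis .
qed

lemma zeta_const_square:
  assumes "0 < \<delta>"
  shows "(zeta_const \<delta> d)\<^sup>2 = (1 + 2 * rzeta (1 + 2 * \<delta>)) ^ d"
proof -
  have "0 \<le> rzeta (1 + 2 * \<delta>)"
    unfolding rzeta_def using assms by (intro suminf_nonneg summable_rzeta) auto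
  then show ?thesis
    unfolding zeta_const_def
    by (simp add: powr_powr[symmetric] powr_realpow[symmetric] power2_eq_square powr_add[symmetric])
qed

section \<open>Shifted sums over a group\<close>

lemma summable_on_sum:
  fixes f :: "'i \<Rightarrow> 'a \<Rightarrow> 'b::topological_comm_monoid_add"
  assumes "finite I" "\<And>i. i \<in> I \<Longrightarrow> f i summable_on A"
  shows "(\<lambda>x. \<Sum>i\<in>I. f i x) summable_on A"
  using assms by (induction I rule: finite_induct) (auto intro: summable_on_add)

lemma infsum_sum:
  fixes f :: "'i \<Rightarrow> 'a \<Rightarrow> 'b::{topological_comm_monoid_add,t2_space}"
  assumes "finite I" "\<And>i. i \<in> I \<Longrightarrow> f i summable_on A"
  shows "(\<Sum>\<^sub>\<infinity>x\<in>A. \<Sum>i\<in>I. f i x) = (\<Sum>i\<in>I. \<Sum>\<^sub>\<infinity>x\<in>A. f i x)"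
  using assms
proof (induction I rule: finite_induct)
  case (insert i I)
  then show ?case
    by (simp add: infsum_add summable_on_sum)
qed simp

lemma bij_betw_add_left: "bij_betw (\<lambda>m. k + m) UNIV (UNIV :: 'a::group_add set)"
  by (rule bij_betwI[where g = "\<lambda>m. - k + m"]) (auto simp: add.assoc[symmetric])

lemma summable_on_shift_iff:
  fixes k :: "'a::group_add"
  shows "(\<lambda>m. f (k + m)) summable_on UNIV \<longleftrightarrow> f summable_on UNIV"
  using summable_on_reindex_bij_betw[OF bij_betw_add_left] .

lemma infsum_shift:
  fixes k :: "'a::group_add"
  shows "(\<Sum>\<^sub>\<infinity>m. f (k + m)) = (\<Sum>\<^sub>\<infinity>h. f h)"
  using infsum_reindex_bij_betw[OF bij_betw_add_left] .

lemma sum_shift_square_le: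
  fixes b w :: "'a::group_add \<Rightarrow> real"
  assumes K: "finite K" and b: "b summable_on UNIV" "\<And>h. 0 \<le> b h" and w: "\<And>k. 0 \<le> w k"
  shows "(\<Sum>k\<in>K. sqrt (w k) * b (k + m))\<^sup>2 \<le> (\<Sum>\<^sub>\<infinity>h. b h) * (\<Sum>k\<in>K. w k * b (k + m))"
proof -
  have "(\<Sum>k\<in>K. sqrt (w k) * b (k + m))\<^sup>2
      = (\<Sum>k\<in>K. (sqrt (w k) * sqrt (b (k + m))) * sqrt (b (k + m)))\<^sup>2"
    using b(2) by (simp add: mult.assoc)
  also have "\<dots> \<le> (\<Sum>k\<in>K. (sqrt (w k) * sqrt (b (k + m)))\<^sup>2) * (\<Sum>k\<in>K. (sqrt (b (k + m)))\<^sup>2)"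
    by (rule Cauchy_Schwarz_ineq_sum)
  also have "\<dots> = (\<Sum>k\<in>K. w k * b (k + m)) * sum b ((\<lambda>k. k + m) ` K)"
    using b(2) w by (simp add: power_mult_distrib sum.reindex inj_on_def)
  also have "\<dots> \<le> (\<Sum>k\<in>K. w k * b (k + m)) * (\<Sum>\<^sub>\<infinity>h. b h)"
    using K b w by (intro mult_left_mono finite_sum_le_infsum sum_nonneg mult_nonneg_nonneg) auto
  finally show ?thesis
    by (simp add: mult.commute)
qed

lemma shifted_sum_square_le:
  fixes b w :: "'a::group_add \<Rightarrow> real"
  assumes K: "finite K" and b: "b summable_on UNIV" "\<And>h. 0 \<le> b h" and w: "\<And>k. 0 \<le> w k"
  shows "(\<lambda>m. (\<Sum>k\<in>K. sqrt (w k) * b (k + m))\<^sup>2) summable_on UNIV"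
    and "(\<Sum>\<^sub>\<infinity>m. (\<Sum>k\<in>K. sqrt (w k) * b (k + m))\<^sup>2) \<le> sum w K * (\<Sum>\<^sub>\<infinity>h. b h)\<^sup>2"
proof -
  define B where "B = (\<Sum>\<^sub>\<infinity>h. b h)"
  define G where "G m = (\<Sum>k\<in>K. w k * b (k + m))" for m
  have pointwise: "(\<Sum>k\<in>K. sqrt (w k) * b (k + m))\<^sup>2 \<le> B * G m" for m
    unfolding B_def G_def using assms by (rule sum_shift_square_le)
  have shifted: "(\<lambda>m. w k * b (k + m)) summable_on UNIV" for k
    using b(1) by (intro summable_on_cmult_right) (simp add: summable_on_shift_iff)
  have G: "G summable_on UNIV" "(\<Sum>\<^sub>\<infinity>m. G m) = sum w K * B"
    unfolding G_def using K shifted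
    by (auto simp: summable_on_sum infsum_sum infsum_cmult_right' infsum_shift B_def sum_distrib_right)
  have BG: "(\<lambda>m. B * G m) summable_on UNIV"
    using G(1) by (rule summable_on_cmult_right)
  show summable: "(\<lambda>m. (\<Sum>k\<in>K. sqrt (w k) * b (k + m))\<^sup>2) summable_on UNIV"
    by (rule summable_on_comparison_test[OF BG pointwise]) simp
  have "(\<Sum>\<^sub>\<infinity>m. (\<Sum>k\<in>K. sqrt (w k) * b (k + m))\<^sup>2) \<le> (\<Sum>\<^sub>\<infinity>m. B * G m)"
    by (rule infsum_mono[OF summable BG pointwise])
  also have "\<dots> = sum w K * B\<^sup>2"
    by (simp add: infsum_cmult_right' G power2_eq_square)
  finally show "(\<Sum>\<^sub>\<infinity>m. (\<Sum>k\<in>K. sqrt (w k) * b (k + m))\<^sup>2) \<le> sum w K * (\<Sum>\<^sub>\<infinity>h. b h)\<^sup>2"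
    by (simp add: B_def)
qed

section \<open>The Wiener algebra and the truncation error\<close>

lemma wiener_space_abs_integrable:
  "g \<in> wiener_space \<alpha> \<gamma> \<Longrightarrow> g absolutely_integrable_on unit_cube"
  by (simp add: wiener_space_def)

lemma wiener_space_summable:
  "g \<in> wiener_space \<alpha> \<gamma> \<Longrightarrow> (\<lambda>k. sqrt (rw \<alpha> \<gamma> k) * cmod (fcoeff g k)) summable_on UNIV"
  by (simp add: wiener_space_def)

lemma wiener_space_fourier_series:
  "g \<in> wiener_space \<alpha> \<gamma> \<Longrightarrow> y \<in> unit_cube \<Longrightarrow> g y = (\<Sum>\<^sub>\<infinity>k. fcoeff g k * omega k y)"
  by (simp add: wiener_space_def)

lemma wiener_space_summable_fcoeff:
  assumes "g \<in> wiener_space \<alpha> \<gamma>"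
  shows "(\<lambda>k. cmod (fcoeff g k)) summable_on UNIV"
proof (rule summable_on_comparison_test[OF wiener_space_summable[OF assms]])
  fix k
  show "cmod (fcoeff g k) \<le> sqrt (rw \<alpha> \<gamma> k) * cmod (fcoeff g k)"
    using rw_ge_1[of \<alpha> \<gamma> k] by (simp add: mult_le_cancel_right1)
qed simp

lemma wiener_space_summable_fourier:
  assumes "g \<in> wiener_space \<alpha> \<gamma>"
  shows "(\<lambda>k. norm (fcoeff g k * omega k y)) summable_on UNIV"
  using wiener_space_summable_fcoeff[OF assms] by (simp add: norm_mult)

lemma norm_wiener_space_le:
  assumes "g \<in> wiener_space \<alpha> \<gamma>" "y \<in> unit_cube"
  shows "norm (g y) \<le> (\<Sum>\<^sub>\<infinity>k. cmod (fcoeff g k))"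
  using norm_infsum_bound[OF wiener_space_summable_fourier[OF assms(1)]]
  by (simp add: wiener_space_fourier_series[OF assms] norm_mult)

lemma wiener_norm_nonneg: "0 \<le> wiener_norm \<alpha> \<gamma> g"
  unfolding wiener_norm_def by (simp add: infsum_nonneg)

lemma mu_bar_nonneg: "0 \<le> mu_bar N c"
  unfolding mu_bar_def by (simp add: sum_nonneg)

lemma norm_phi_check_le: "norm (phi_check N c x k) \<le> mu_bar N c"
proof -
  have "norm (\<Sum>n=1..N. complex_of_real (c n) * omega k (x n)) \<le> (\<Sum>n=1..N. \<bar>c n\<bar>)"
    using norm_sum[of "\<lambda>n. complex_of_real (c n) * omega k (x n)"] by (simp add: norm_mult)
  then show ?thesis
    unfolding phi_check_def mu_bar_def norm_mult by (simp add: norm_divide divide_right_mono)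
qed

lemma continuous_on_phiK: "continuous_on S (phiK K N c x)"
  unfolding phiK_def cnj_omega by (intro continuous_intros)

lemma norm_phiK_le: "norm (phiK K N c x y) \<le> (\<Sum>k\<in>K. norm (phi_check N c x k))"
  unfolding phiK_def by (rule order_trans[OF norm_sum]) (simp add: norm_mult)

lemma qmc_eq_infsum_fcoeff:
  assumes g: "g \<in> wiener_space \<alpha> \<gamma>" and x: "\<forall>n\<in>{1..N}. x n \<in> unit_cube"
  shows "(1 / of_nat N) * (\<Sum>n=1..N. complex_of_real (c n) * g (x n))
       = (\<Sum>\<^sub>\<infinity>k. fcoeff g k * phi_check N c x k)"
proof -
  have summable: "(\<lambda>k. complex_of_real (c n) * (fcoeff g k * omega k (x n))) summable_on UNIV" for n
    using abs_summable_summable[OF wiener_space_summable_fourier[OF g]]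
    by (rule summable_on_cmult_right)
  have "(\<Sum>n=1..N. complex_of_real (c n) * g (x n))
      = (\<Sum>n=1..N. \<Sum>\<^sub>\<infinity>k. complex_of_real (c n) * (fcoeff g k * omega k (x n)))"
    using x by (simp add: wiener_space_fourier_series[OF g] infsum_cmult_right')
  also have "\<dots> = (\<Sum>\<^sub>\<infinity>k. \<Sum>n=1..N. complex_of_real (c n) * (fcoeff g k * omega k (x n)))"
    using summable by (simp add: infsum_sum)
  finally have "(1 / of_nat N) * (\<Sum>n=1..N. complex_of_real (c n) * g (x n))
      = (\<Sum>\<^sub>\<infinity>k. (1 / of_nat N) * (\<Sum>n=1..N. complex_of_real (c n) * (fcoeff g k * omega k (x n))))"
    by (simp only: infsum_cmult_right')
  also have "\<dots> = (\<Sum>\<^sub>\<infinity>k. fcoeff g k * phi_check N c x k)"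
    unfolding phi_check_def by (intro infsum_cong) (simp add: sum_distrib_left algebra_simps)
  finally show ?thesis .
qed

lemma integral_mult_phiK:
  assumes "g absolutely_integrable_on unit_cube" "finite K"
  shows "integral unit_cube (\<lambda>y. g y * phiK K N c x y) = (\<Sum>k\<in>K. fcoeff g k * phi_check N c x k)"
proof -
  have "integral unit_cube (\<lambda>y. g y * phiK K N c x y)
      = integral unit_cube (\<lambda>y. \<Sum>k\<in>K. phi_check N c x k * (g y * cnj (omega k y)))"
    unfolding phiK_def by (simp add: sum_distrib_left algebra_simps)
  also have "\<dots> = (\<Sum>k\<in>K. integral unit_cube (\<lambda>y. phi_check N c x k * (g y * cnj (omega k y))))"
    using assms by (intro integral_sum integrable_on_mult_right integrable_mult_cnj_omega)
  also have "\<dots> = (\<Sum>k\<in>K. fcoeff g k * phi_check N c x k)"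
    unfolding fcoeff_def by (simp add: mult.commute)
  finally show ?thesis .
qed

lemma summable_norm_fcoeff_mult_phi_check:
  assumes "g \<in> wiener_space \<alpha> \<gamma>"
  shows "(\<lambda>k. norm (fcoeff g k * phi_check N c x k)) summable_on UNIV"
proof (rule summable_on_comparison_test)
  show "(\<lambda>k. cmod (fcoeff g k) * mu_bar N c) summable_on UNIV"
    using wiener_space_summable_fcoeff[OF assms] by (rule summable_on_cmult_left)
  show "norm (fcoeff g k * phi_check N c x k) \<le> cmod (fcoeff g k) * mu_bar N c" for k
    unfolding norm_mult by (intro mult_left_mono norm_phi_check_le) simp
qed simp

lemma err1_eq_tail:
  assumes g: "g \<in> wiener_space \<alpha> \<gamma>" and x: "\<forall>n\<in>{1..N}. x n \<in> unit_cube" and K: "finite K"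
  shows "err1 g K N c x = norm (\<Sum>\<^sub>\<infinity>k\<in>-K. fcoeff g k * phi_check N c x k)"
  unfolding err1_def qmc_eq_infsum_fcoeff[OF g x]
    integral_mult_phiK[OF wiener_space_abs_integrable[OF g] K]
  using K abs_summable_summable[OF summable_norm_fcoeff_mult_phi_check[OF g]]
  by (simp add: Compl_eq_Diff_UNIV infsum_Diff)

lemma err1_le:
  assumes g: "g \<in> wiener_space \<alpha> \<gamma>" and x: "\<forall>n\<in>{1..N}. x n \<in> unit_cube"
    and K: "K = hyp_cross \<alpha> \<nu> \<gamma>" "finite K" and "0 < \<nu>"
  shows "err1 g K N c x \<le> wiener_norm \<alpha> \<gamma> g * mu_bar N c / sqrt \<nu>"
proof -
  define F where "F k = fcoeff g k * phi_check N c x k" for k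
  define b where "b k = sqrt (rw \<alpha> \<gamma> k) * cmod (fcoeff g k)" for k
  have F: "(\<lambda>k. norm (F k)) summable_on - K"
    unfolding F_def using summable_norm_fcoeff_mult_phi_check[OF g]
    by (rule summable_on_subset_banach) simp
  have b: "b summable_on UNIV"
    using wiener_space_summable[OF g] by (simp add: b_def[abs_def])
  have tail_le: "norm (F k) \<le> b k * (mu_bar N c / sqrt \<nu>)" if "k \<in> - K" for k
  proof -
    have "sqrt \<nu> * cmod (fcoeff g k) \<le> b k"
      using that K(1) unfolding b_def hyp_cross_def by (intro mult_right_mono) auto
    then have "cmod (fcoeff g k) \<le> b k / sqrt \<nu>"
      using \<open>0 < \<nu>\<close> by (simp add: le_divide_eq mult.commute)
    then have "cmod (fcoeff g k) * mu_bar N c \<le> b k / sqrt \<nu> * mu_bar N c"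
      by (rule mult_right_mono[OF _ mu_bar_nonneg])
    moreover have "norm (F k) \<le> cmod (fcoeff g k) * mu_bar N c"
      unfolding F_def norm_mult by (intro mult_left_mono norm_phi_check_le) simp
    ultimately show ?thesis
      by simp
  qed
  have "err1 g K N c x \<le> (\<Sum>\<^sub>\<infinity>k\<in>-K. norm (F k))"
    unfolding err1_eq_tail[OF g x K(2)] F_def[symmetric] using F by (rule norm_infsum_bound)
  also have "\<dots> \<le> (\<Sum>\<^sub>\<infinity>k\<in>-K. b k * (mu_bar N c / sqrt \<nu>))"
  proof (rule infsum_mono[OF F])
    show "(\<lambda>k. b k * (mu_bar N c / sqrt \<nu>)) summable_on - K"
      using summable_on_subset_banach[OF b, of "- K"] by (intro summable_on_cmult_left) simp
  qed (rule tail_le)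
  also have "\<dots> = (\<Sum>\<^sub>\<infinity>k\<in>-K. b k) * (mu_bar N c / sqrt \<nu>)"
    by (rule infsum_cmult_left')
  also have "\<dots> \<le> (\<Sum>\<^sub>\<infinity>k. b k) * (mu_bar N c / sqrt \<nu>)"
    using b by (intro mult_right_mono infsum_mono_neutral summable_on_subset_banach[OF b])
      (auto simp: b_def mu_bar_nonneg \<open>0 < \<nu>\<close> less_imp_le)
  finally show ?thesis
    by (simp add: wiener_norm_def b_def)
qed

section \<open>The Korobov norm of the integrand and the lattice error\<close>

lemma fcoeff_mult_phiK:
  assumes "g absolutely_integrable_on unit_cube" "finite K"
  shows "fcoeff (\<lambda>y. g y * phiK K N c x y) m = (\<Sum>k\<in>K. phi_check N c x k * fcoeff g (k + m))"
proof -
  have "fcoeff (\<lambda>y. g y * phiK K N c x y) m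
      = integral unit_cube (\<lambda>y. \<Sum>k\<in>K. phi_check N c x k * (g y * cnj (omega (k + m) y)))"
    unfolding phiK_def fcoeff_def omega_add
    by (simp add: sum_distrib_left sum_distrib_right algebra_simps)
  also have "\<dots> = (\<Sum>k\<in>K. integral unit_cube (\<lambda>y. phi_check N c x k * (g y * cnj (omega (k + m) y))))"
    using assms by (intro integral_sum integrable_on_mult_right integrable_mult_cnj_omega)
  also have "\<dots> = (\<Sum>k\<in>K. phi_check N c x k * fcoeff g (k + m))"
    unfolding fcoeff_def by simp
  finally show ?thesis .
qed

lemma fourier_series_mult_phiK:
  assumes g: "g \<in> wiener_space \<alpha> \<gamma>" and K: "finite K" and y: "y \<in> unit_cube"
  shows "g y * phiK K N c x y = (\<Sum>\<^sub>\<infinity>m. (\<Sum>k\<in>K. phi_check N c x k * fcoeff g (k + m)) * omega m y)"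
proof -
  define F where "F h = fcoeff g h * omega h y" for h
  have F: "F summable_on UNIV"
    unfolding F_def using wiener_space_summable_fourier[OF g] by (rule abs_summable_summable)
  have shift: "fcoeff g (k + m) * omega m y = F (k + m) * cnj (omega k y)" for k m
  proof -
    have "omega (k + m) y * cnj (omega k y) = omega m y"
      by (simp add: cnj_omega flip: omega_add)
    then show ?thesis
      by (simp add: F_def mult.assoc)
  qed
  have summable: "(\<lambda>m. phi_check N c x k * (fcoeff g (k + m) * omega m y)) summable_on UNIV" for k
    unfolding shift using F
    by (intro summable_on_cmult_right summable_on_cmult_left) (simp add: summable_on_shift_iff)
  have "(\<Sum>\<^sub>\<infinity>m. (\<Sum>k\<in>K. phi_check N c x k * fcoeff g (k + m)) * omega m y)
      = (\<Sum>\<^sub>\<infinity>m. \<Sum>k\<in>K. phi_check N c x k * (fcoeff g (k + m) * omega m y))"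
    by (simp add: sum_distrib_right mult.assoc)
  also have "\<dots> = (\<Sum>k\<in>K. phi_check N c x k * (\<Sum>\<^sub>\<infinity>m. F (k + m)) * cnj (omega k y))"
    using K summable by (simp add: infsum_sum infsum_cmult_right' infsum_cmult_left' shift mult.assoc)
  also have "\<dots> = g y * phiK K N c x y"
    unfolding infsum_shift unfolding F_def wiener_space_fourier_series[OF g y, symmetric] phiK_def
    by (simp add: sum_distrib_left algebra_simps)
  finally show ?thesis ..
qed

lemma weighted_fcoeff_mult_phiK_le:
  assumes "0 \<le> \<beta>" "0 \<le> s" "2 * \<beta> = 2 * \<alpha> - s" "\<forall>j. 0 < \<gamma> j \<and> \<gamma> j \<le> 1"
    and K: "K \<subseteq> hyp_cross \<alpha> \<nu> \<gamma>"
  shows "sqrt (rw \<beta> \<gamma> m) * cmod (\<Sum>k\<in>K. phi_check N c x k * fcoeff g (k + m))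
    \<le> mu_bar N c * c_const \<alpha> \<gamma> * sqrt \<nu>
       * (\<Sum>k\<in>K. sqrt (decay s k) * (sqrt (rw \<alpha> \<gamma> (k + m)) * cmod (fcoeff g (k + m))))"
proof -
  have term_le: "sqrt (rw \<beta> \<gamma> m) * cmod (fcoeff g (k + m))
      \<le> c_const \<alpha> \<gamma> * sqrt \<nu> * (sqrt (decay s k) * (sqrt (rw \<alpha> \<gamma> (k + m)) * cmod (fcoeff g (k + m))))"
    if "k \<in> K" for k
  proof -
    have "sqrt (rw \<beta> \<gamma> m) \<le> sqrt ((c_const \<alpha> \<gamma>)\<^sup>2 * \<nu> * decay s k * rw \<alpha> \<gamma> (k + m))"
      using assms that by (intro real_sqrt_le_mono rw_le_shift) auto
    also have "\<dots> = c_const \<alpha> \<gamma> * sqrt \<nu> * sqrt (decay s k) * sqrt (rw \<alpha> \<gamma> (k + m))"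
      by (simp add: real_sqrt_mult c_const_nonneg)
    finally have "sqrt (rw \<beta> \<gamma> m)
        \<le> c_const \<alpha> \<gamma> * sqrt \<nu> * sqrt (decay s k) * sqrt (rw \<alpha> \<gamma> (k + m))" .
    from mult_right_mono[OF this norm_ge_zero[of "fcoeff g (k + m)"]] show ?thesis
      by (simp add: mult.assoc)
  qed
  have "sqrt (rw \<beta> \<gamma> m) * cmod (\<Sum>k\<in>K. phi_check N c x k * fcoeff g (k + m))
      \<le> sqrt (rw \<beta> \<gamma> m) * (\<Sum>k\<in>K. mu_bar N c * cmod (fcoeff g (k + m)))"
  proof (rule mult_left_mono)
    show "cmod (\<Sum>k\<in>K. phi_check N c x k * fcoeff g (k + m)) \<le> (\<Sum>k\<in>K. mu_bar N c * cmod (fcoeff g (k + m)))"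
      by (rule order_trans[OF norm_sum sum_mono])
        (simp add: norm_mult mult_right_mono norm_phi_check_le)
  qed simp
  also have "\<dots> = mu_bar N c * (\<Sum>k\<in>K. sqrt (rw \<beta> \<gamma> m) * cmod (fcoeff g (k + m)))"
    by (simp add: sum_distrib_left algebra_simps)
  also have "\<dots> \<le> mu_bar N c * (\<Sum>k\<in>K. c_const \<alpha> \<gamma> * sqrt \<nu>
      * (sqrt (decay s k) * (sqrt (rw \<alpha> \<gamma> (k + m)) * cmod (fcoeff g (k + m)))))"
    using term_le by (intro mult_left_mono sum_mono mu_bar_nonneg)
  finally show ?thesis
    by (simp add: sum_distrib_left mult.assoc)
qed

lemma korobov_sum_mult_phiK_le:
  fixes K :: "(int^'n::finite) set"
  assumes g: "g \<in> wiener_space \<alpha> \<gamma>" and "0 < \<delta>" "0 \<le> \<beta>" "2 * \<beta> = 2 * \<alpha> - (1 + 2 * \<delta>)"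
    and "\<forall>j. 0 < \<gamma> j \<and> \<gamma> j \<le> 1" and K: "K \<subseteq> hyp_cross \<alpha> \<nu> \<gamma>" "finite K"
  shows "(\<lambda>m. rw \<beta> \<gamma> m * (cmod (fcoeff (\<lambda>y. g y * phiK K N c x y) m))\<^sup>2) summable_on UNIV"
    and "(\<Sum>\<^sub>\<infinity>m. rw \<beta> \<gamma> m * (cmod (fcoeff (\<lambda>y. g y * phiK K N c x y) m))\<^sup>2)
      \<le> (mu_bar N c * c_const \<alpha> \<gamma> * sqrt \<nu> * wiener_norm \<alpha> \<gamma> g * zeta_const \<delta> CARD('n))\<^sup>2"
proof -
  let ?f = "\<lambda>y. g y * phiK K N c x y"
  define s where "s = 1 + 2 * \<delta>"
  define A where "A = mu_bar N c * c_const \<alpha> \<gamma> * sqrt \<nu>"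
  define b where "b h = sqrt (rw \<alpha> \<gamma> h) * cmod (fcoeff g h)" for h
  define S where "S m = (\<Sum>k\<in>K. sqrt (decay s k) * b (k + m))" for m
  have b: "b summable_on UNIV"
    using wiener_space_summable[OF g] by (simp add: b_def[abs_def])
  have pointwise: "rw \<beta> \<gamma> m * (cmod (fcoeff ?f m))\<^sup>2 \<le> A\<^sup>2 * (S m)\<^sup>2" for m
  proof -
    have "sqrt (rw \<beta> \<gamma> m) * cmod (fcoeff ?f m) \<le> A * S m"
      unfolding fcoeff_mult_phiK[OF wiener_space_abs_integrable[OF g] K(2)] A_def S_def b_def
      using assms \<open>0 < \<delta>\<close> by (intro weighted_fcoeff_mult_phiK_le) (auto simp: s_def)
    then have "(sqrt (rw \<beta> \<gamma> m) * cmod (fcoeff ?f m))\<^sup>2 \<le> (A * S m)\<^sup>2"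
      by (intro power_mono) auto
    then show ?thesis
      by (simp add: power_mult_distrib)
  qed
  have b_nonneg: "0 \<le> b h" for h
    by (simp add: b_def)
  note S_square = shifted_sum_square_le[where w = "decay s", OF K(2) b b_nonneg decay_nonneg, folded S_def]
  have S_square_summable: "(\<lambda>m. A\<^sup>2 * (S m)\<^sup>2) summable_on UNIV"
    using S_square(1) b_def by (intro summable_on_cmult_right) auto
  show summable: "(\<lambda>m. rw \<beta> \<gamma> m * (cmod (fcoeff ?f m))\<^sup>2) summable_on UNIV"
    by (rule summable_on_comparison_test[OF S_square_summable pointwise]) simp
  have "(\<Sum>\<^sub>\<infinity>m. rw \<beta> \<gamma> m * (cmod (fcoeff ?f m))\<^sup>2) \<le> (\<Sum>\<^sub>\<infinity>m. A\<^sup>2 * (S m)\<^sup>2)"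
    by (rule infsum_mono[OF summable S_square_summable pointwise])
  also have "\<dots> \<le> A\<^sup>2 * (sum (decay s) K * (wiener_norm \<alpha> \<gamma> g)\<^sup>2)"
    unfolding infsum_cmult_right' wiener_norm_def
    using S_square(2) b_def by (intro mult_left_mono) auto
  also have "\<dots> \<le> A\<^sup>2 * ((zeta_const \<delta> CARD('n))\<^sup>2 * (wiener_norm \<alpha> \<gamma> g)\<^sup>2)"
    unfolding zeta_const_square[OF \<open>0 < \<delta>\<close>]
    using sum_decay_le[of s K] \<open>0 < \<delta>\<close> K(2) by (intro mult_left_mono mult_right_mono) (auto simp: s_def)
  finally show "(\<Sum>\<^sub>\<infinity>m. rw \<beta> \<gamma> m * (cmod (fcoeff ?f m))\<^sup>2)
      \<le> (mu_bar N c * c_const \<alpha> \<gamma> * sqrt \<nu> * wiener_norm \<alpha> \<gamma> g * zeta_const \<delta> CARD('n))\<^sup>2"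
    by (simp add: A_def power_mult_distrib mult_ac)
qed

lemma mult_phiK_in_korobov_space:
  fixes K :: "(int^'n::finite) set"
  assumes g: "g \<in> wiener_space \<alpha> \<gamma>" and "0 < \<delta>" "0 \<le> \<beta>" "2 * \<beta> = 2 * \<alpha> - (1 + 2 * \<delta>)"
    and "\<forall>j. 0 < \<gamma> j \<and> \<gamma> j \<le> 1" and K: "K \<subseteq> hyp_cross \<alpha> \<nu> \<gamma>" "finite K" and "0 \<le> \<nu>"
  shows "(\<lambda>y. g y * phiK K N c x y) \<in> korobov_space \<beta> \<gamma>"
    and "korobov_norm \<beta> \<gamma> (\<lambda>y. g y * phiK K N c x y)
      \<le> mu_bar N c * c_const \<alpha> \<gamma> * sqrt \<nu> * wiener_norm \<alpha> \<gamma> g * zeta_const \<delta> CARD('n)"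
proof -
  let ?f = "\<lambda>y. g y * phiK K N c x y"
  let ?R = "mu_bar N c * c_const \<alpha> \<gamma> * sqrt \<nu> * wiener_norm \<alpha> \<gamma> g * zeta_const \<delta> CARD('n)"
  note coeff_sum = korobov_sum_mult_phiK_le[OF assms(1-7), of N c x]
  have "bounded (phiK K N c x ` unit_cube)"
    unfolding bounded_iff using norm_phiK_le by blast
  then have abs_int: "?f absolutely_integrable_on unit_cube"
    by (intro absolutely_integrable_mult_bounded_continuous wiener_space_abs_integrable[OF g]
        continuous_on_phiK) auto
  have "norm (?f y) \<le> (\<Sum>\<^sub>\<infinity>k. cmod (fcoeff g k)) * (\<Sum>k\<in>K. norm (phi_check N c x k))"
    if "y \<in> unit_cube" for y
    unfolding norm_mult using norm_wiener_space_le[OF g that] norm_phiK_le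
    by (intro mult_mono) (auto intro: infsum_nonneg)
  then have square_int: "(\<lambda>y. (cmod (?f y))\<^sup>2) integrable_on unit_cube"
    using abs_int by (intro integrable_square_norm_bounded) auto
  show "?f \<in> korobov_space \<beta> \<gamma>"
    unfolding korobov_space_def
    using abs_int square_int coeff_sum(1)
      fourier_series_mult_phiK[OF g K(2)] fcoeff_mult_phiK[OF wiener_space_abs_integrable[OF g] K(2)]
    by simp
  have "0 \<le> ?R"
    using \<open>0 \<le> \<nu>\<close> by (simp add: mu_bar_nonneg c_const_nonneg wiener_norm_nonneg zeta_const_def)
  then show "korobov_norm \<beta> \<gamma> ?f \<le> ?R"
    unfolding korobov_norm_def using real_sqrt_le_mono[OF coeff_sum(2)] by simp
qed

lemma korobov_space_cmult:
  assumes f: "f \<in> korobov_space \<beta> \<gamma>"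
  shows "(\<lambda>y. complex_of_real a * f y) \<in> korobov_space \<beta> \<gamma>"
proof -
  have "(\<lambda>y. f y * complex_of_real a) absolutely_integrable_on unit_cube"
    using f by (intro absolutely_integrable_mult_bounded_continuous)
      (auto simp: korobov_space_def image_constant_conv)
  moreover have "(\<lambda>y. a\<^sup>2 * (cmod (f y))\<^sup>2) integrable_on unit_cube"
    using f by (intro integrable_on_mult_right) (simp add: korobov_space_def)
  moreover have "(\<lambda>k. a\<^sup>2 * (rw \<beta> \<gamma> k * (cmod (fcoeff f k))\<^sup>2)) summable_on UNIV"
    using f by (intro summable_on_cmult_right) (simp add: korobov_space_def)
  ultimately show ?thesis
    using f by (auto simp: korobov_space_def fcoeff_cmult norm_mult power_mult_distrib
        infsum_cmult_right' mult.commute mult.left_commute)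
qed

lemma korobov_norm_cmult:
  "korobov_norm \<beta> \<gamma> (\<lambda>y. complex_of_real a * f y) = \<bar>a\<bar> * korobov_norm \<beta> \<gamma> f"
proof -
  have coeff: "rw \<beta> \<gamma> k * (cmod (fcoeff (\<lambda>y. complex_of_real a * f y) k))\<^sup>2
      = a\<^sup>2 * (rw \<beta> \<gamma> k * (cmod (fcoeff f k))\<^sup>2)" for k
    by (simp add: fcoeff_cmult norm_mult power_mult_distrib)
  show ?thesis
    unfolding korobov_norm_def coeff infsum_cmult_right' real_sqrt_mult by simp
qed

lemma korobov_norm_nonneg: "0 \<le> korobov_norm \<beta> \<gamma> f"
  unfolding korobov_norm_def by (simp add: infsum_nonneg)

lemma quadrature_error_le_wce_pos:
  assumes f: "f \<in> korobov_space \<beta> \<gamma>" and r: "0 < r" "korobov_norm \<beta> \<gamma> f \<le> r"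
    and W: "wce \<beta> \<gamma> L z \<le> ereal W"
  shows "cmod (integral unit_cube f - (1 / of_nat L) * (\<Sum>l<L. f (z l))) \<le> r * W"
proof -
  define E where "E h = cmod (integral unit_cube h - (1 / of_nat L) * (\<Sum>l<L. h (z l)))" for h
  define h where "h = (\<lambda>y. complex_of_real (1 / r) * f y)"
  have "h \<in> korobov_space \<beta> \<gamma>"
    unfolding h_def by (rule korobov_space_cmult[OF f])
  moreover have "korobov_norm \<beta> \<gamma> h \<le> 1"
    unfolding h_def korobov_norm_cmult using r by (simp add: divide_le_eq)
  ultimately have "ereal (E h) \<le> wce \<beta> \<gamma> L z"
    unfolding wce_def E_def by (intro SUP_upper) auto
  then have "E h \<le> W"
    using W by (metis ereal_less_eq(3) order_trans)
  moreover have "integral unit_cube h - (1 / of_nat L) * (\<Sum>l<L. h (z l))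
      = (integral unit_cube f - (1 / of_nat L) * (\<Sum>l<L. f (z l))) / complex_of_real r"
    unfolding h_def by (simp add: sum_divide_distrib[symmetric] diff_divide_distrib)
  then have "E h = E f / r"
    using r by (simp add: E_def norm_divide)
  ultimately show ?thesis
    using r by (simp add: E_def divide_le_eq mult.commute)
qed

text \<open>Normalising \<open>f\<close> needs \<open>r > 0\<close>; letting \<open>r\<close> decrease to \<open>R\<close> also covers \<open>R = 0\<close>.\<close>

lemma quadrature_error_le_wce:
  assumes f: "f \<in> korobov_space \<beta> \<gamma>" and R: "korobov_norm \<beta> \<gamma> f \<le> R"
    and W: "wce \<beta> \<gamma> L z \<le> ereal W"
  shows "cmod (integral unit_cube f - (1 / of_nat L) * (\<Sum>l<L. f (z l))) \<le> R * W"
proof (rule field_le_epsilon)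
  fix e :: real
  assume "0 < e"
  define r where "r = R + e / (\<bar>W\<bar> + 1)"
  have "0 \<le> R"
    using R korobov_norm_nonneg order_trans by blast
  moreover have "0 < e / (\<bar>W\<bar> + 1)"
    using \<open>0 < e\<close> by simp
  ultimately have "cmod (integral unit_cube f - (1 / of_nat L) * (\<Sum>l<L. f (z l))) \<le> r * W"
    using R by (intro quadrature_error_le_wce_pos[OF f _ _ W]) (auto simp: r_def)
  also have "\<dots> = R * W + e * (W / (\<bar>W\<bar> + 1))"
    by (simp add: r_def algebra_simps)
  also have "\<dots> \<le> R * W + e"
    using \<open>0 < e\<close> by (intro add_left_mono mult_left_le) (auto simp: divide_le_eq)
  finally show "cmod (integral unit_cube f - (1 / of_nat L) * (\<Sum>l<L. f (z l))) \<le> R * W + e" .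
qed

lemma err2_le:
  fixes K :: "(int^'n::finite) set"
  assumes "g \<in> wiener_space \<alpha> \<gamma>" "0 < \<delta>" "0 \<le> \<beta>" "2 * \<beta> = 2 * \<alpha> - (1 + 2 * \<delta>)"
    and "\<forall>j. 0 < \<gamma> j \<and> \<gamma> j \<le> 1" "K \<subseteq> hyp_cross \<alpha> \<nu> \<gamma>" "finite K" "0 \<le> \<nu>"
    and W: "wce \<beta> \<gamma> L z \<le> ereal W"
  shows "err2 g K N c x L z
    \<le> mu_bar N c * c_const \<alpha> \<gamma> * sqrt \<nu> * wiener_norm \<alpha> \<gamma> g * zeta_const \<delta> CARD('n) * W"
  unfolding err2_def
  by (intro quadrature_error_le_wce[OF _ _ W] mult_phiK_in_korobov_space[OF assms(1-8)])

lemma err1_add_err2_le: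
  fixes K :: "(int^'n::finite) set"
  assumes g: "g \<in> wiener_space \<alpha> \<gamma>" and x: "\<forall>n\<in>{1..N}. x n \<in> unit_cube"
    and "0 < \<delta>" "0 \<le> \<beta>" "2 * \<beta> = 2 * \<alpha> - (1 + 2 * \<delta>)" "\<forall>j. 0 < \<gamma> j \<and> \<gamma> j \<le> 1"
    and K: "K = hyp_cross \<alpha> \<nu> \<gamma>" "finite K" and "0 < \<nu>"
    and W: "wce \<beta> \<gamma> L z \<le> ereal (C * real L powr (- \<beta> + \<tau>))"
  shows "err1 g K N c x + err2 g K N c x L z
    \<le> wiener_norm \<alpha> \<gamma> g * (1 / sqrt \<nu> + sqrt \<nu> / real L powr (\<beta> - \<tau>) * c_const \<alpha> \<gamma>
        * zeta_const \<delta> CARD('n) * C) * mu_bar N c"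
proof -
  have "real L powr (- \<beta> + \<tau>) = 1 / real L powr (\<beta> - \<tau>)"
    unfolding powr_minus_divide[symmetric] by (simp add: algebra_simps)
  then have "wce \<beta> \<gamma> L z \<le> ereal (C / real L powr (\<beta> - \<tau>))"
    using W by simp
  then have "err2 g K N c x L z \<le> mu_bar N c * c_const \<alpha> \<gamma> * sqrt \<nu> * wiener_norm \<alpha> \<gamma> g
      * zeta_const \<delta> CARD('n) * (C / real L powr (\<beta> - \<tau>))"
    using assms(3-6) K \<open>0 < \<nu>\<close> by (intro err2_le[OF g]) auto
  moreover have "err1 g K N c x \<le> wiener_norm \<alpha> \<gamma> g * mu_bar N c / sqrt \<nu>"
    using err1_le[OF g x K \<open>0 < \<nu>\<close>] .
  ultimately show ?thesis
    by (simp add: field_simps)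
qed

lemma norm_qmc_diff_le_err1_err2:
  "cmod ((1 / of_nat N) * (\<Sum>n=1..N. complex_of_real (c n) * g (x n))
       - (1 / of_nat L) * (\<Sum>l<L. g (z l) * phiK K N c x (z l)))
     \<le> err1 g K N c x + err2 g K N c x L z"
  unfolding err1_def err2_def
  by (rule norm_diff_triangle_le[where y = "integral unit_cube (\<lambda>y. g y * phiK K N c x y)"]) simp_all

theorem theorem3p8:
  fixes \<gamma> :: "'n::{finite,linorder} \<Rightarrow> real"
    and \<alpha> \<delta> \<tau> :: real
    and g :: "(real, 'n) vec \<Rightarrow> complex"
    and N :: nat and x :: "nat \<Rightarrow> (real, 'n) vec" and c :: "nat \<Rightarrow> real"
    and L :: nat and gv :: "(nat, 'n) vec"
  assumes "\<alpha> > 1" and "0 < \<delta>" and "\<delta> < \<alpha> - 1"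
    and "0 < \<tau>" and "\<tau> \<le> \<alpha> - 1 - \<delta>"
    and "\<forall>j. \<gamma> j \<le> 1" and "\<forall>j. 0 < \<gamma> j" and "\<forall>i j. i \<le> j \<longrightarrow> \<gamma> j \<le> \<gamma> i"
    and "g \<in> wiener_space \<alpha> \<gamma>"
    and "N \<ge> 1" and "\<forall>n\<in>{1..N}. x n \<in> unit_cube"
    and "prime L" and "\<forall>j. 1 \<le> gv $ j \<and> gv $ j \<le> L - 1"
    and "\<forall>\<tau>'. 0 < \<tau>' \<and> \<tau>' \<le> (\<alpha> - 1/2 - \<delta>) - 1/2 \<longrightarrow>
          wce (\<alpha> - 1/2 - \<delta>) \<gamma> L (lattice_pt L gv)
            \<le> ereal (Cconst \<gamma> (\<alpha> - 1/2 - \<delta>) \<tau>' * real L powr (- (\<alpha> - 1/2 - \<delta>) + \<tau>'))"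
  shows "\<forall>\<nu>>1. let K = hyp_cross \<alpha> \<nu> \<gamma>; z = lattice_pt L gv in
     cmod ((1 / of_nat N) * (\<Sum>n=1..N. complex_of_real (c n) * g (x n))
           - (1 / of_nat L) * (\<Sum>l<L. g (z l) * phiK K N c x (z l)))
       \<le> err1 g K N c x + err2 g K N c x L z
     \<and> err1 g K N c x + err2 g K N c x L z
       \<le> wiener_norm \<alpha> \<gamma> g *
          (1 / sqrt \<nu> + sqrt \<nu> / real L powr (\<alpha> - 1/2 - \<delta> - \<tau>) * c_const \<alpha> \<gamma>
             * zeta_const \<delta> (card (UNIV :: 'n set)) * Cconst \<gamma> (\<alpha> - 1/2 - \<delta>) \<tau>) * mu_bar N c"
proof -
  define \<beta> where "\<beta> = \<alpha> - 1/2 - \<delta>"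
  have \<gamma>: "\<forall>j. 0 < \<gamma> j \<and> \<gamma> j \<le> 1"
    using assms(6,7) by auto
  have wce: "wce \<beta> \<gamma> L (lattice_pt L gv) \<le> ereal (Cconst \<gamma> \<beta> \<tau> * real L powr (- \<beta> + \<tau>))"
    using assms(4,5,14) by (simp add: \<beta>_def)
  have "err1 g (hyp_cross \<alpha> \<nu> \<gamma>) N c x + err2 g (hyp_cross \<alpha> \<nu> \<gamma>) N c x L (lattice_pt L gv)
      \<le> wiener_norm \<alpha> \<gamma> g * (1 / sqrt \<nu> + sqrt \<nu> / real L powr (\<beta> - \<tau>) * c_const \<alpha> \<gamma>
          * zeta_const \<delta> CARD('n) * Cconst \<gamma> \<beta> \<tau>) * mu_bar N c"
    if "1 < \<nu>" for \<nu>
    using assms(1-3,9,11) \<gamma> that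
    by (intro err1_add_err2_le[OF _ _ _ _ _ _ refl finite_hyp_cross _ wce]) (auto simp: \<beta>_def)
  then show ?thesis
    unfolding Let_def \<beta>_def using norm_qmc_diff_le_err1_err2 by auto
qed

end
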